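(* Suppose the Drift Assumption holds and let $1<p\le2$. Define $\Psi(x)=\Phi(x)^{p/2}$. Then $\Psi$ is differentiable (with $\nabla\Psi(0)=0$), and there exist constants $\eta_p,L_p>0$ such that, with $a_1=c_1^{p/2}$, $a_2=c_2^{p/2}$, for all $x,y\in\mathbb{R}^d$: (1) $a_1\|x-x^\star\|^p\le\Psi(x-x^\star)\le a_2\|x-x^\star\|^p$; (2) $\langle\nabla\Psi(x-x^\star),H(x)-x\rangle\le-\eta_p\Psi(x-x^\star)$ (one can take $\eta_p=\tfrac p2\eta$); (3) $\Psi(x)\le\Psi(y)+\langle\nabla\Psi(y),x-y\rangle+\frac{L_p}{p}\|x-y\|^p$.
   Context: Let $\|\cdot\|$ denote the Euclidean norm on $\mathbb{R}^d$ and $\langle\cdot,\cdot\rangle$ the Euclidean inner product; $H:\mathbb{R}^d\to\mathbb{R}^d$. Drift Assumption: there is $x^\star\in\mathbb{R}^d$ with $H(x^\star)=x^\star$, a differentiable function $\Phi:\mathbb{R}^d\to[0,\infty)$ and constants $\eta,c_1,c_2,L_2>0$ such that (i) $\langle\nabla\Phi(x-x^\star),H(x)-x\rangle\le-\eta\,\Phi(x-x^\star)$ for all $x\in\mathbb{R}^d$; (ii) $\Phi(y)\le\Phi(x)+\langle\nabla\Phi(x),y-x\rangle+\frac{L_2}{2}\|y-x\|^2$ for all $x,y\in\mathbb{R}^d$; (iii) $c_1\|x-x^\star\|^2\le\Phi(x-x^\star)\le c_2\|x-x^\star\|^2$ for all $x\in\mathbb{R}^d$. *)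

theory Defs
  imports "HOL-Analysis.Analysis"
begin

end

theory Submission
  imports Defs
begin

(* With q = p/2 in (1/2, 1] we have Psi = Phi^q and grad Psi = q Phi^(q-1) grad Phi. The norm
   bounds and the drift inequality follow by raising to the power q and multiplying by
   q Phi^(q-1) >= 0; at the minimiser 0, Psi y <= c2^q |y|^(2q) with 2q > 1 forces a zero derivative.
   For the Holder descent inequality, nonnegativity and L-smoothness give |grad Phi y|^2 <= 2 L Phi y.
   Put a = Phi y and r = |x - y|. If a > r^2, concavity of t^q at a turns the quadratic remainder
   L r^2 / 2 into q a^(q-1) L r^2 / 2 <= q L r^(2q) / 2. If a <= r^2, then Phi x = O(r^2) and the
   linear term is O(a^(q-1/2) r) = O(r^(2q)). *)

lemma powr_le_tangent_line:
  fixes a b q :: real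
  assumes "0 < a" "0 \<le> b" "0 < q" "q \<le> 1"
  shows "b powr q \<le> a powr q + q * a powr (q - 1) * (b - a)"
proof -
  have tangent: "a powr q + q * a powr (q - 1) * (b - a) = (q * b + (1 - q) * a) * a powr (q - 1)"
    using assms(1) by (simp add: powr_diff field_simps)
  show ?thesis
  proof (cases "b = 0")
    case True
    then show ?thesis using tangent assms by simp
  next
    case False
    have "b powr q = b powr q * a powr (1 - q) * a powr (q - 1)"
      using assms(1) by (simp add: mult.assoc flip: powr_add)
    also have "\<dots> \<le> (q * b + (1 - q) * a) * a powr (q - 1)"
      using assms False by (intro mult_right_mono Youngs_inequality_0) auto
    finally show ?thesis using tangent by simp
  qed
qed

lemma powr_mult_power2:
  fixes c r q :: real
  assumes "0 \<le> c" "0 \<le> r"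
  shows "(c * r\<^sup>2) powr q = c powr q * r powr (2 * q)"
proof -
  have "r\<^sup>2 = r powr 2"
    using assms by simp
  then show ?thesis
    by (simp add: powr_mult powr_powr)
qed

lemma powr_descent_far:
  fixes a b G L r q :: real
  assumes "r\<^sup>2 < a" "0 \<le> b" "0 \<le> r" "0 \<le> L" "0 < q" "q \<le> 1"
    and descent: "b \<le> a + G + L / 2 * r\<^sup>2"
  shows "b powr q \<le> a powr q + q * a powr (q - 1) * G + q * L / 2 * r powr (2 * q)"
proof -
  have "0 < a"
    using assms(1) zero_le_power2[of r] by linarith
  have decay: "a powr (q - 1) * r\<^sup>2 \<le> r powr (2 * q)"
  proof (cases "r = 0")
    case False
    then have "a powr (q - 1) \<le> (r\<^sup>2) powr (q - 1)"
      using assms by (intro powr_mono2') auto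
    then have "a powr (q - 1) * r\<^sup>2 \<le> (r\<^sup>2) powr (q - 1) * r\<^sup>2"
      by (simp add: mult_right_mono)
    also have "\<dots> = r powr (2 * q - 2) * r powr 2"
      using powr_mult_power2[of 1 r "q - 1"] assms by (simp add: algebra_simps)
    also have "\<dots> = r powr (2 * q)"
      by (simp flip: powr_add)
    finally show ?thesis .
  qed (use assms in simp)
  have "b powr q \<le> a powr q + q * a powr (q - 1) * (b - a)"
    using \<open>0 < a\<close> assms by (intro powr_le_tangent_line) auto
  also have "\<dots> \<le> a powr q + q * a powr (q - 1) * (G + L / 2 * r\<^sup>2)"
    using descent assms by (intro add_left_mono mult_left_mono) auto
  also have "\<dots> \<le> a powr q + q * a powr (q - 1) * G + q * L / 2 * r powr (2 * q)"
    using mult_left_mono[OF decay, of "q * L / 2"] assms by (simp add: algebra_simps)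
  finally show ?thesis .
qed

lemma powr_descent_near:
  fixes a b G L r q :: real
  assumes "a \<le> r\<^sup>2" "0 \<le> a" "0 \<le> b" "0 \<le> r" "0 \<le> L" "1/2 \<le> q" "q \<le> 1"
    and descent: "b \<le> a + G + L / 2 * r\<^sup>2"
    and slope: "\<bar>G\<bar> \<le> sqrt (2 * L * a) * r"
  shows "b powr q \<le> a powr q + q * a powr (q - 1) * G
           + ((1 + sqrt (2 * L) + L / 2) powr q + q * sqrt (2 * L)) * r powr (2 * q)"
proof -
  define K where "K = 1 + sqrt (2 * L) + L / 2"
  have "sqrt a \<le> r"
    using assms real_sqrt_le_mono[of a "r\<^sup>2"] by simp
  then have G_le: "\<bar>G\<bar> \<le> sqrt (2 * L) * sqrt a * r"
    using slope by (simp add: real_sqrt_mult)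
  also have "\<dots> \<le> sqrt (2 * L) * r\<^sup>2"
    using mult_right_mono[OF \<open>sqrt a \<le> r\<close> \<open>0 \<le> r\<close>] assms
    by (simp add: power2_eq_square mult.assoc mult_left_mono)
  finally have "b \<le> K * r\<^sup>2"
    using descent assms unfolding K_def by (simp add: algebra_simps)
  then have "b powr q \<le> (K * r\<^sup>2) powr q"
    using assms by (intro powr_mono2) auto
  also have "\<dots> = K powr q * r powr (2 * q)"
    using assms by (intro powr_mult_power2) (auto simp: K_def)
  finally have b_bound: "b powr q \<le> K powr q * r powr (2 * q)" .
  have "- G \<le> sqrt (2 * L) * sqrt a * r"
    using G_le by linarith
  then have "- (q * a powr (q - 1) * G) \<le> q * a powr (q - 1) * (sqrt (2 * L) * sqrt a * r)"
    using mult_left_mono[of "- G" _ "q * a powr (q - 1)"] assms by simp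
  also have "\<dots> = q * sqrt (2 * L) * (r * a powr (q - 1 / 2))"
    using assms by (simp add: powr_half_sqrt[symmetric] algebra_simps flip: powr_add)
  also have "\<dots> \<le> q * sqrt (2 * L) * (r * (r\<^sup>2) powr (q - 1 / 2))"
    using assms by (intro mult_left_mono powr_mono2) auto
  also have "\<dots> = q * sqrt (2 * L) * r powr (2 * q)"
    using powr_mult_power2[of 1 r "q - 1 / 2"] powr_mult_base[of r "2 * q - 1"] assms by simp
  finally have "- (q * a powr (q - 1) * G) \<le> q * sqrt (2 * L) * r powr (2 * q)" .
  then show ?thesis
    using b_bound powr_ge_zero[of a q] unfolding K_def[symmetric] distrib_right by linarith
qed

lemma powr_descent:
  fixes a b G L r q :: real
  assumes "0 \<le> a" "0 \<le> b" "0 \<le> r" "0 \<le> L" "1/2 \<le> q" "q \<le> 1"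
    and "b \<le> a + G + L / 2 * r\<^sup>2"
    and "\<bar>G\<bar> \<le> sqrt (2 * L * a) * r"
  shows "b powr q \<le> a powr q + q * a powr (q - 1) * G
           + (q * L / 2 + (1 + sqrt (2 * L) + L / 2) powr q + q * sqrt (2 * L)) * r powr (2 * q)"
proof (cases "r\<^sup>2 < a")
  case True
  then have "b powr q \<le> a powr q + q * a powr (q - 1) * G + q * L / 2 * r powr (2 * q)"
    using assms by (intro powr_descent_far) auto
  moreover have "0 \<le> (1 + sqrt (2 * L) + L / 2) powr q * r powr (2 * q)"
    and "0 \<le> q * sqrt (2 * L) * r powr (2 * q)"
    using assms by simp_all
  ultimately show ?thesis
    unfolding distrib_right by linarith
next
  case False
  then have "b powr q \<le> a powr q + q * a powr (q - 1) * G
               + ((1 + sqrt (2 * L) + L / 2) powr q + q * sqrt (2 * L)) * r powr (2 * q)"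
    using assms by (intro powr_descent_near) auto
  moreover have "0 \<le> q * L / 2 * r powr (2 * q)"
    using assms by simp
  ultimately show ?thesis
    unfolding distrib_right by linarith
qed

lemma gradient_bound_of_nonneg_smooth:
  fixes f :: "'a::real_inner \<Rightarrow> real"
  assumes nonneg: "\<And>x. 0 \<le> f x" and "0 < L"
    and smooth: "\<And>x y. f y \<le> f x + g x \<bullet> (y - x) + L / 2 * (norm (y - x))\<^sup>2"
  shows "(norm (g x))\<^sup>2 \<le> 2 * L * f x"
proof -
  have "0 \<le> f (x - (1 / L) *\<^sub>R g x)"
    by (rule nonneg)
  also have "\<dots> \<le> f x + g x \<bullet> (x - (1 / L) *\<^sub>R g x - x) + L / 2 * (norm (x - (1 / L) *\<^sub>R g x - x))\<^sup>2"
    by (rule smooth)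
  also have "\<dots> = f x - (norm (g x))\<^sup>2 / (2 * L)"
    using \<open>0 < L\<close> by (simp add: dot_square_norm power_divide field_simps power2_eq_square)
  finally show ?thesis
    using \<open>0 < L\<close> by (simp add: field_simps)
qed

lemma powr_of_smooth_nonneg_holder:
  fixes f :: "'a::real_inner \<Rightarrow> real"
  assumes nonneg: "\<And>x. 0 \<le> f x" and "0 < L"
    and smooth: "\<And>x y. f y \<le> f x + g x \<bullet> (y - x) + L / 2 * (norm (y - x))\<^sup>2"
    and "1/2 \<le> q" "q \<le> 1"
  shows "\<exists>C>0. \<forall>x y. f x powr q \<le> f y powr q + ((q * f y powr (q - 1)) *\<^sub>R g y) \<bullet> (x - y)
                          + C * norm (x - y) powr (2 * q)"
proof -
  define C where "C = q * L / 2 + (1 + sqrt (2 * L) + L / 2) powr q + q * sqrt (2 * L)"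
  have "f x powr q \<le> f y powr q + ((q * f y powr (q - 1)) *\<^sub>R g y) \<bullet> (x - y)
          + C * norm (x - y) powr (2 * q)" for x y
  proof -
    have "norm (g y) \<le> sqrt (2 * L * f y)"
      using gradient_bound_of_nonneg_smooth[OF nonneg \<open>0 < L\<close> smooth] by (simp add: real_le_rsqrt)
    then have "\<bar>g y \<bullet> (x - y)\<bar> \<le> sqrt (2 * L * f y) * norm (x - y)"
      using Cauchy_Schwarz_ineq2[of "g y" "x - y"] mult_right_mono[of _ _ "norm (x - y)"] by force
    then have "f x powr q \<le> f y powr q + q * f y powr (q - 1) * (g y \<bullet> (x - y))
                 + C * norm (x - y) powr (2 * q)"
      unfolding C_def using assms by (intro powr_descent) auto
    then show ?thesis
      by simp
  qed
  moreover have "0 < C"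
    unfolding C_def using assms by (intro add_pos_nonneg) auto
  ultimately show ?thesis
    by blast
qed

lemma has_derivative_zero_of_powr_bounded:
  fixes F :: "'a::real_normed_vector \<Rightarrow> real"
  assumes "F 0 = 0" "1 < s" and bound: "\<And>y. \<bar>F y\<bar> \<le> c * norm y powr s"
  shows "(F has_derivative (\<lambda>h. 0)) (at 0)"
  unfolding has_derivative_iff_norm
proof (intro conjI bounded_linear_zero)
  have lim: "((\<lambda>y. c * norm y powr (s - 1)) \<longlongrightarrow> 0) (at (0::'a))"
    using \<open>1 < s\<close> by (intro tendsto_mult_right_zero tendsto_zero_powrI tendsto_norm_zero tendsto_ident_at) auto
  have upper: "\<forall>\<^sub>F y in at 0. norm (F y - F 0 - 0) / norm (y - 0) \<le> c * norm y powr (s - 1)"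
    unfolding eventually_at_filter
  proof (intro always_eventually allI impI)
    fix y :: 'a
    assume "y \<noteq> 0"
    have "\<bar>F y\<bar> / norm y \<le> c * norm y powr s / norm y"
      using bound by (simp add: divide_right_mono)
    then show "norm (F y - F 0 - 0) / norm (y - 0) \<le> c * norm y powr (s - 1)"
      using \<open>F 0 = 0\<close> \<open>y \<noteq> 0\<close> by (simp add: powr_diff)
  qed
  show "((\<lambda>y. norm (F y - F 0 - 0) / norm (y - 0)) \<longlongrightarrow> 0) (at 0)"
    by (rule tendsto_sandwich[OF _ upper tendsto_const lim]) simp
qed

lemma has_derivative_powr_of_quadratic_bound:
  fixes f :: "'a::real_inner \<Rightarrow> real"
  assumes deriv: "\<And>x. (f has_derivative (\<lambda>h. g x \<bullet> h)) (at x)"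
    and nonneg: "\<And>x. 0 \<le> f x" and pos: "\<And>x. x \<noteq> 0 \<Longrightarrow> 0 < f x"
    and upper: "\<And>x. f x \<le> c * (norm x)\<^sup>2" and "0 \<le> c" "1/2 < q"
  shows "((\<lambda>x. f x powr q) has_derivative (\<lambda>h. ((q * f x powr (q - 1)) *\<^sub>R g x) \<bullet> h)) (at x)"
proof (cases "x = 0")
  case False
  have "((\<lambda>x. f x powr q) has_derivative (\<lambda>h. f x powr q * (0 * ln (f x) + (g x \<bullet> h) * q / f x))) (at x)"
    using has_derivative_powr[OF deriv has_derivative_const pos[OF False]] by simp
  moreover have "f x powr q = f x * f x powr (q - 1)"
    using powr_mult_base[OF nonneg[of x], of "q - 1"] by simp
  ultimately show ?thesis
    using pos[OF False] by (simp add: field_simps)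
next
  case True
  \<comment> \<open>Here f x = 0, and 0 powr (q - 1) = 0 makes the claimed gradient vanish.\<close>
  have "f 0 = 0"
    using upper[of 0] nonneg[of 0] by simp
  have bound: "\<bar>f y powr q\<bar> \<le> c powr q * norm y powr (2 * q)" for y
  proof -
    have "\<bar>f y powr q\<bar> \<le> (c * (norm y)\<^sup>2) powr q"
      using upper nonneg \<open>1/2 < q\<close> by (simp add: powr_mono2)
    also have "\<dots> = c powr q * norm y powr (2 * q)"
      using \<open>0 \<le> c\<close> by (simp add: powr_mult_power2)
    finally show ?thesis .
  qed
  have "((\<lambda>x. f x powr q) has_derivative (\<lambda>h. 0)) (at 0)"
    using \<open>f 0 = 0\<close> \<open>1/2 < q\<close> by (intro has_derivative_zero_of_powr_bounded[OF _ _ bound]) auto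
  then show ?thesis
    using True \<open>f 0 = 0\<close> by simp
qed

lemma drift_powr:
  fixes g v :: "'a::real_inner"
  assumes "g \<bullet> v \<le> - \<eta> * t" "0 \<le> t" "0 \<le> q"
  shows "((q * t powr (q - 1)) *\<^sub>R g) \<bullet> v \<le> - (q * \<eta>) * t powr q"
proof -
  have "((q * t powr (q - 1)) *\<^sub>R g) \<bullet> v \<le> q * t powr (q - 1) * (- \<eta> * t)"
    using mult_left_mono[OF assms(1), of "q * t powr (q - 1)"] assms by simp
  also have "\<dots> = - (q * \<eta>) * t powr q"
    using powr_mult_base[OF \<open>0 \<le> t\<close>, of "q - 1"] by (simp add: mult_ac)
  finally show ?thesis .
qed

theorem proposition2:
  fixes H :: "'a::euclidean_space \<Rightarrow> 'a"
    and Phi :: "'a \<Rightarrow> real"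
    and gradPhi :: "'a \<Rightarrow> 'a"
    and xstar :: 'a
    and \<eta> c1 c2 L2 p :: real
  assumes fix_pt: "H xstar = xstar"
    and Phi_nonneg: "\<And>x. Phi x \<ge> 0"
    and Phi_grad: "\<And>x. (Phi has_derivative (\<lambda>h. gradPhi x \<bullet> h)) (at x)"
    and consts_pos: "\<eta> > 0" "c1 > 0" "c2 > 0" "L2 > 0"
    and drift: "\<And>x. gradPhi (x - xstar) \<bullet> (H x - x) \<le> - \<eta> * Phi (x - xstar)"
    and smooth: "\<And>x y. Phi y \<le> Phi x + gradPhi x \<bullet> (y - x) + L2 / 2 * (norm (y - x))\<^sup>2"
    and equiv: "\<And>x. c1 * (norm (x - xstar))\<^sup>2 \<le> Phi (x - xstar)"
               "\<And>x. Phi (x - xstar) \<le> c2 * (norm (x - xstar))\<^sup>2"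
    and p: "1 < p" "p \<le> 2"
  defines "Psi \<equiv> (\<lambda>x. Phi x powr (p / 2))"
  shows "\<exists>gradPsi :: 'a \<Rightarrow> 'a.
           (\<forall>x. (Psi has_derivative (\<lambda>h. gradPsi x \<bullet> h)) (at x)) \<and>
           gradPsi 0 = 0 \<and>
           (\<exists>\<eta>p Lp. \<eta>p > 0 \<and> Lp > 0 \<and> \<eta>p = p / 2 * \<eta> \<and>
             (\<forall>x. c1 powr (p/2) * norm (x - xstar) powr p \<le> Psi (x - xstar) \<and>
                  Psi (x - xstar) \<le> c2 powr (p/2) * norm (x - xstar) powr p) \<and>
             (\<forall>x. gradPsi (x - xstar) \<bullet> (H x - x) \<le> - \<eta>p * Psi (x - xstar)) \<and>
             (\<forall>x y. Psi x \<le> Psi y + gradPsi y \<bullet> (x - y) + Lp / p * norm (x - y) powr p))"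
proof -
  have lower: "c1 * (norm z)\<^sup>2 \<le> Phi z" and upper: "Phi z \<le> c2 * (norm z)\<^sup>2" for z
    using equiv[of "z + xstar"] by simp_all
  have pos: "0 < Phi z" if "z \<noteq> 0" for z
    using lower[of z] mult_pos_pos[OF consts_pos(2), of "(norm z)\<^sup>2"] that by simp
  define gradPsi where "gradPsi y = (p / 2 * Phi y powr (p / 2 - 1)) *\<^sub>R gradPhi y" for y
  obtain C where "0 < C"
    and holder: "\<And>x y. Psi x \<le> Psi y + gradPsi y \<bullet> (x - y) + C * norm (x - y) powr p"
    using powr_of_smooth_nonneg_holder[OF Phi_nonneg consts_pos(4) smooth, of "p / 2"] p
    unfolding Psi_def gradPsi_def by auto
  have "(Psi has_derivative (\<lambda>h. gradPsi x \<bullet> h)) (at x)" for x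
    unfolding Psi_def gradPsi_def using consts_pos p
    by (intro has_derivative_powr_of_quadratic_bound[OF Phi_grad Phi_nonneg pos upper]) auto
  moreover have "gradPsi 0 = 0"
    using upper[of 0] Phi_nonneg[of 0] unfolding gradPsi_def by simp
  moreover have "c1 powr (p/2) * norm z powr p \<le> Psi z \<and> Psi z \<le> c2 powr (p/2) * norm z powr p" for z
    using powr_mono2[OF _ _ lower[of z], of "p/2"] powr_mono2[OF _ _ upper[of z], of "p/2"]
      powr_mult_power2[of c1 "norm z" "p/2"] powr_mult_power2[of c2 "norm z" "p/2"] consts_pos p
    unfolding Psi_def by (simp add: Phi_nonneg)
  moreover have "gradPsi (x - xstar) \<bullet> (H x - x) \<le> - (p / 2 * \<eta>) * Psi (x - xstar)" for x
    unfolding Psi_def gradPsi_def using drift_powr[OF drift Phi_nonneg, where q = "p / 2"] p by simp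
  moreover have "Psi x \<le> Psi y + gradPsi y \<bullet> (x - y) + (p * C) / p * norm (x - y) powr p" for x y
    using holder p by simp
  moreover have "0 < p / 2 * \<eta>" "0 < p * C"
    using \<open>0 < C\<close> consts_pos p by simp_all
  ultimately show ?thesis
    by blast
qed

end
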